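(* If superclub holds at $\omega_1$, i.e. $\clubsuit^{\Diamond}_{\omega_1}$, then $\binom{\omega_1}{\omega}\nrightarrow\binom{\omega_1}{\omega}$: there is a coloring $c:\omega_1\times\omega\to 2$ such that for no $Y\in[\omega_1]^{\omega_1}$ and $Z\in[\omega]^{\omega}$ is $c\restriction(Y\times Z)$ constant.
   Context: $\clubsuit^{\Diamond}_{\omega_1}$ is the existence of a sequence $(S_\alpha\mid\alpha<\omega_1)$ with $S_\alpha\subseteq\alpha$ such that for every $A\in[\omega_1]^{\omega_1}$ there is $B\in[A]^{\omega_1}$ for which $\{\alpha<\omega_1\mid B\cap\alpha=S_\alpha\}$ is stationary in $\omega_1$. The polarized relation $\binom{\alpha}{\beta}\rightarrow\binom{\gamma}{\delta}$ means that for every $c:\alpha\times\beta\to 2$ there are $A\in[\alpha]^\gamma$, $B\in[\beta]^\delta$ with $c\restriction(A\times B)$ constant; $\nrightarrow$ is its negation. *)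

theory Defs
  imports "HOL-Library.Countable_Set"
begin

text \<open>omega_1 is represented by a well-ordered type 'a that is uncountable and all of whose
  proper initial segments are countable (this characterises order type omega_1).
  An ordinal alpha < omega_1 is identified with the set of its predecessors {beta. beta < alpha}.\<close>

definition omega1_type :: "'a::wellorder itself \<Rightarrow> bool" where
  "omega1_type _ \<longleftrightarrow> \<not> countable (UNIV :: 'a set) \<and> (\<forall>\<alpha>::'a. countable {\<beta>. \<beta> < \<alpha>})"

definition unbounded_set :: "'a::wellorder set \<Rightarrow> bool" where
  "unbounded_set C \<longleftrightarrow> (\<forall>\<beta>. \<exists>\<gamma>\<in>C. \<beta> \<le> \<gamma>)"

definition closed_set :: "'a::wellorder set \<Rightarrow> bool" where
  "closed_set C \<longleftrightarrow> (\<forall>\<alpha>. (\<exists>\<beta>. \<beta> < \<alpha>) \<and> (\<forall>\<beta><\<alpha>. \<exists>\<gamma>\<in>C. \<beta> < \<gamma> \<and> \<gamma> < \<alpha>) \<longrightarrow> \<alpha> \<in> C)"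

definition club :: "'a::wellorder set \<Rightarrow> bool" where
  "club C \<longleftrightarrow> closed_set C \<and> unbounded_set C"

definition stationary :: "'a::wellorder set \<Rightarrow> bool" where
  "stationary S \<longleftrightarrow> (\<forall>C. club C \<longrightarrow> S \<inter> C \<noteq> {})"

text \<open>superclub (clubsuit-diamond) at omega_1; [omega_1]^omega_1 = uncountable subsets.\<close>
definition superclub :: "'a::wellorder itself \<Rightarrow> bool" where
  "superclub _ \<longleftrightarrow> (\<exists>S :: 'a \<Rightarrow> 'a set.
     (\<forall>\<alpha>. S \<alpha> \<subseteq> {\<beta>. \<beta> < \<alpha>}) \<and>
     (\<forall>A :: 'a set. \<not> countable A \<longrightarrow>
        (\<exists>B \<subseteq> A. \<not> countable B \<and> stationary {\<alpha>. B \<inter> {\<beta>. \<beta> < \<alpha>} = S \<alpha>})))"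

end

theory Submission
  imports Defs
begin

text \<open>Build the colouring row by row along \<open>\<omega>\<^sub>1\<close>. Row \<open>\<delta>\<close> is chosen so that, for every
  \<open>\<alpha> < \<delta>\<close> and colour \<open>b\<close>, it takes a colour \<open>\<noteq> b\<close> somewhere on the set of columns where all rows
  indexed by the guess \<open>S \<alpha>\<close> have colour \<open>b\<close>, provided that set is infinite; only countably many
  such requirements arise, and a diagonal choice meets them all. If \<open>Y \<times> Z\<close> were \<open>b\<close>-homogeneous,
  superclub gives \<open>B \<subseteq> Y\<close> guessed correctly on an uncountable set \<open>T\<close> of \<open>\<alpha>\<close>'s. For \<open>\<alpha> \<in> T\<close>
  pick \<open>d \<alpha> \<in> B\<close> above \<open>\<alpha>\<close> and a column \<open>m \<alpha>\<close> witnessing the requirement at \<open>\<alpha>\<close> in row \<open>d \<alpha>\<close>.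
  Uncountably many \<open>\<alpha>\<close> share the same column \<open>n\<close>; taking two of them, \<open>\<alpha>\<^sub>1\<close> and \<open>\<alpha>\<^sub>2 > d \<alpha>\<^sub>1\<close>,
  row \<open>d \<alpha>\<^sub>1\<close> belongs to \<open>S \<alpha>\<^sub>2\<close>, so it has colour \<open>b\<close> at \<open>n\<close>, yet colour \<open>\<noteq> b\<close> at \<open>n = m \<alpha>\<^sub>1\<close>.\<close>

lemma strict_mono_choice:
  fixes W :: "nat \<Rightarrow> nat set"
  assumes "\<And>k. infinite (W k)"
  shows "\<exists>m. strict_mono m \<and> (\<forall>k. m k \<in> W k)"
proof -
  have above: "\<exists>y. y \<in> W k \<and> x < y" for k x
    using assms[of k] by (meson finite_nat_set_iff_bounded_le not_le_imp_less subsetI mem_Collect_eq)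
  have "\<exists>m. \<forall>k. m k \<in> W k \<and> m k < m (Suc k)"
    by (rule dependent_nat_choice) (use above in auto)
  then show ?thesis
    unfolding strict_mono_Suc_iff by blast
qed

lemma countable_requirements_escape:
  assumes "countable F" and "\<forall>(W, b)\<in>F. infinite W"
  shows "\<exists>r :: nat \<Rightarrow> bool. \<forall>(W, b)\<in>F. \<exists>n\<in>W. r n \<noteq> b"
proof (cases "F = {}")
  case False
  define g where "g = from_nat_into F"
  have range_g: "range g = F"
    using False assms(1) by (simp add: g_def)
  have "infinite (fst (g k))" for k
  proof -
    have "g k \<in> F" using range_g by blast
    with assms(2) show ?thesis by (cases "g k") auto
  qed
  then obtain m where m: "strict_mono m" "\<And>k. m k \<in> fst (g k)"
    using strict_mono_choice[of "\<lambda>k. fst (g k)"] by blast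
  define r where "r n = (\<not> snd (g (inv m n)))" for n
  have "\<exists>n\<in>W. r n \<noteq> b" if "(W, b) \<in> F" for W b
  proof -
    have "(W, b) \<in> range g" using that range_g by simp
    then obtain k where k: "(W, b) = g k" by (rule rangeE)
    have "r (m k) \<noteq> b"
      using inv_f_f[OF strict_mono_imp_inj_on[OF m(1)]] k[symmetric] by (simp add: r_def)
    with m(2)[of k] k[symmetric] show ?thesis by auto
  qed
  then show ?thesis by (intro exI[of _ r]) auto
qed simp

lemma uncountable_fibre:
  fixes f :: "'a \<Rightarrow> 'b::countable"
  assumes "\<not> countable T"
  shows "\<exists>y. \<not> countable {x\<in>T. f x = y}"
proof (rule ccontr)
  assume "\<nexists>y. \<not> countable {x\<in>T. f x = y}"
  then have "countable (\<Union>y. {x\<in>T. f x = y})" by (simp add: countable_UN)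
  moreover have "(\<Union>y. {x\<in>T. f x = y}) = T" by blast
  ultimately show False using assms by simp
qed

lemma closed_above: "closed_set {\<gamma>::'a::wellorder. x < \<gamma>}"
  unfolding closed_set_def
proof (intro allI impI)
  fix \<alpha> :: 'a
  assume "(\<exists>\<beta>. \<beta> < \<alpha>) \<and> (\<forall>\<beta><\<alpha>. \<exists>\<gamma>\<in>{\<gamma>. x < \<gamma>}. \<beta> < \<gamma> \<and> \<gamma> < \<alpha>)"
  then obtain \<gamma> where "x < \<gamma>" "\<gamma> < \<alpha>" by auto
  then show "\<alpha> \<in> {\<gamma>. x < \<gamma>}" by simp
qed

context
  assumes omega1: "omega1_type TYPE('a::wellorder)"
begin

lemma uncountable_UNIV_omega1: "\<not> countable (UNIV :: 'a set)"
  using omega1 by (simp add: omega1_type_def)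

lemma countable_below_omega1: "countable {\<beta>::'a. \<beta> < \<alpha>}"
  using omega1 by (simp add: omega1_type_def)

lemma countable_atMost_omega1: "countable {\<beta>::'a. \<beta> \<le> \<alpha>}"
proof -
  have "{\<beta>::'a. \<beta> \<le> \<alpha>} = insert \<alpha> {\<beta>. \<beta> < \<alpha>}" by auto
  then show ?thesis using countable_below_omega1 by simp
qed

lemma uncountable_unbounded_omega1:
  assumes "\<not> countable (U :: 'a set)"
  shows "\<exists>u\<in>U. p < u"
proof (rule ccontr)
  assume "\<not> ?thesis"
  then have "U \<subseteq> {\<beta>. \<beta> \<le> p}" by (auto simp: not_less)
  then show False using assms countable_atMost_omega1 countable_subset by blast
qed

lemma countable_bounded_omega1:
  assumes "countable (X :: 'a set)"
  shows "\<exists>x. \<forall>t\<in>X. t < x"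
proof -
  have "countable (\<Union>t\<in>X. {\<beta>::'a. \<beta> \<le> t})"
    using assms countable_atMost_omega1 by auto
  then have "\<not> UNIV \<subseteq> (\<Union>t\<in>X. {\<beta>::'a. \<beta> \<le> t})"
    using uncountable_UNIV_omega1 countable_subset by blast
  then obtain x where "x \<notin> (\<Union>t\<in>X. {\<beta>::'a. \<beta> \<le> t})" by blast
  then show ?thesis by (auto simp: not_le)
qed

lemma club_above: "club {\<gamma>::'a. x < \<gamma>}"
proof -
  have "unbounded_set {\<gamma>::'a. x < \<gamma>}"
    unfolding unbounded_set_def
  proof
    fix \<beta> :: 'a
    obtain u where "max x \<beta> < u"
      using uncountable_unbounded_omega1[OF uncountable_UNIV_omega1] by blast
    then show "\<exists>\<gamma>\<in>{\<gamma>. x < \<gamma>}. \<beta> \<le> \<gamma>" by auto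
  qed
  with closed_above show ?thesis by (simp add: club_def)
qed

lemma stationary_uncountable:
  assumes "stationary (T :: 'a set)"
  shows "\<not> countable T"
proof
  assume "countable T"
  then obtain x where "\<forall>t\<in>T. t < x" using countable_bounded_omega1 by blast
  then have "T \<inter> {\<gamma>. x < \<gamma>} = {}" by auto
  with assms club_above[of x] show False by (simp add: stationary_def)
qed

end

definition homogeneous_columns ::
    "('a \<Rightarrow> nat \<Rightarrow> bool) \<Rightarrow> ('a \<Rightarrow> 'a set) \<Rightarrow> bool \<Rightarrow> 'a \<Rightarrow> nat set" where
  "homogeneous_columns c S b \<alpha> = {n. \<forall>\<gamma>\<in>S \<alpha>. c \<gamma> n = b}"

definition escaping_row ::
    "('a::wellorder \<Rightarrow> nat \<Rightarrow> bool) \<Rightarrow> ('a \<Rightarrow> 'a set) \<Rightarrow> 'a \<Rightarrow> (nat \<Rightarrow> bool) \<Rightarrow> bool" where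
  "escaping_row c S \<delta> r \<longleftrightarrow> (\<forall>\<alpha><\<delta>. \<forall>b. infinite (homogeneous_columns c S b \<alpha>) \<longrightarrow>
     (\<exists>n\<in>homogeneous_columns c S b \<alpha>. r n \<noteq> b))"

definition superclub_coloring :: "('a::wellorder \<Rightarrow> 'a set) \<Rightarrow> 'a \<Rightarrow> nat \<Rightarrow> bool" where
  "superclub_coloring S = wfrec {(x, y). x < y} (\<lambda>c \<delta>. SOME r. escaping_row c S \<delta> r)"

lemma escaping_row_exists:
  assumes "omega1_type TYPE('a::wellorder)"
  shows "\<exists>r. escaping_row c S (\<delta>::'a) r"
proof -
  define F where "F = (\<lambda>(\<alpha>, b). (homogeneous_columns c S b \<alpha>, b)) ` ({\<alpha>. \<alpha> < \<delta>} \<times> UNIV)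
                       \<inter> {p. infinite (fst p)}"
  have "countable F"
    unfolding F_def using countable_below_omega1[OF assms] by (intro countable_Int1 countable_image) simp
  moreover have "\<forall>(W, b)\<in>F. infinite W" unfolding F_def by auto
  ultimately obtain r where r: "\<forall>(W, b)\<in>F. \<exists>n\<in>W. r n \<noteq> b"
    using countable_requirements_escape by blast
  have "(homogeneous_columns c S b \<alpha>, b) \<in> F"
    if "\<alpha> < \<delta>" "infinite (homogeneous_columns c S b \<alpha>)" for \<alpha> b
    using that unfolding F_def by (intro IntI image_eqI[where x="(\<alpha>, b)"]) auto
  then have "escaping_row c S \<delta> r"
    using r unfolding escaping_row_def by fastforce
  then show ?thesis by blast
qed

text \<open>Row \<open>\<delta>\<close> only looks at the rows in the guesses \<open>S \<alpha>\<close> for \<open>\<alpha> < \<delta>\<close>, all of which lie below \<open>\<delta>\<close>;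
  this is what makes the recursion legitimate.\<close>
lemma superclub_coloring_escaping:
  assumes "omega1_type TYPE('a::wellorder)" and "\<And>\<alpha>. S \<alpha> \<subseteq> {\<beta>. \<beta> < \<alpha>}"
  shows "escaping_row (superclub_coloring S) S (\<delta>::'a) (superclub_coloring S \<delta>)"
proof -
  let ?R = "{(x::'a, y). x < y}" and ?c = "superclub_coloring S"
  have same_columns: "homogeneous_columns (cut ?c ?R \<delta>) S b \<alpha> = homogeneous_columns ?c S b \<alpha>"
    if "\<alpha> < \<delta>" for b \<alpha>
  proof -
    have "cut ?c ?R \<delta> \<gamma> = ?c \<gamma>" if "\<gamma> \<in> S \<alpha>" for \<gamma>
      using assms(2)[of \<alpha>] that \<open>\<alpha> < \<delta>\<close> by (intro cut_apply) (auto intro: less_trans)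
    then show ?thesis unfolding homogeneous_columns_def by simp
  qed
  have "?c \<delta> = (SOME r. escaping_row (cut ?c ?R \<delta>) S \<delta> r)"
    unfolding superclub_coloring_def by (rule wfrec[OF wf])
  then have "escaping_row (cut ?c ?R \<delta>) S \<delta> (?c \<delta>)"
    using someI_ex[OF escaping_row_exists[OF assms(1)]] by simp
  then show ?thesis
    unfolding escaping_row_def using same_columns by simp
qed

lemma escaping_coloring_not_homogeneous:
  assumes omega1: "omega1_type TYPE('a::wellorder)"
    and escaping: "\<And>\<delta>::'a. escaping_row c S \<delta> (c \<delta>)"
    and "\<not> countable B"
    and "\<not> countable T"
    and guessed: "\<And>\<alpha>. \<alpha> \<in> T \<Longrightarrow> S \<alpha> = B \<inter> {\<beta>. \<beta> < \<alpha>}"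
    and "infinite Z"
  shows "\<not> (\<forall>y\<in>B. \<forall>z\<in>Z. c y z = b)"
proof
  assume hom: "\<forall>y\<in>B. \<forall>z\<in>Z. c y z = b"
  have "\<exists>\<delta> n. \<delta> \<in> B \<and> \<alpha> < \<delta> \<and> n \<in> homogeneous_columns c S b \<alpha> \<and> c \<delta> n \<noteq> b"
    if "\<alpha> \<in> T" for \<alpha>
  proof -
    obtain \<delta> where "\<delta> \<in> B" "\<alpha> < \<delta>"
      using uncountable_unbounded_omega1[OF omega1 \<open>\<not> countable B\<close>] by blast
    moreover have "Z \<subseteq> homogeneous_columns c S b \<alpha>"
      using hom guessed[OF that] by (auto simp: homogeneous_columns_def)
    then have "infinite (homogeneous_columns c S b \<alpha>)"
      using \<open>infinite Z\<close> finite_subset by blast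
    ultimately show ?thesis
      using escaping[of \<delta>] unfolding escaping_row_def by blast
  qed
  then obtain d m where dm: "\<And>\<alpha>. \<alpha> \<in> T \<Longrightarrow>
      d \<alpha> \<in> B \<and> \<alpha> < d \<alpha> \<and> m \<alpha> \<in> homogeneous_columns c S b \<alpha> \<and> c (d \<alpha>) (m \<alpha>) \<noteq> b"
    by metis
  obtain n where fibre: "\<not> countable {\<alpha>\<in>T. m \<alpha> = n}"
    using uncountable_fibre[OF \<open>\<not> countable T\<close>] by blast
  then have "{\<alpha>\<in>T. m \<alpha> = n} \<noteq> {}" by force
  then obtain \<alpha>\<^sub>1 where "\<alpha>\<^sub>1 \<in> T" "m \<alpha>\<^sub>1 = n" by blast
  obtain \<alpha>\<^sub>2 where "\<alpha>\<^sub>2 \<in> T" "m \<alpha>\<^sub>2 = n" "d \<alpha>\<^sub>1 < \<alpha>\<^sub>2"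
    using uncountable_unbounded_omega1[OF omega1 fibre, of "d \<alpha>\<^sub>1"] by blast
  have "d \<alpha>\<^sub>1 \<in> S \<alpha>\<^sub>2"
    using guessed[OF \<open>\<alpha>\<^sub>2 \<in> T\<close>] dm[OF \<open>\<alpha>\<^sub>1 \<in> T\<close>] \<open>d \<alpha>\<^sub>1 < \<alpha>\<^sub>2\<close> by blast
  then have "c (d \<alpha>\<^sub>1) n = b"
    using dm[OF \<open>\<alpha>\<^sub>2 \<in> T\<close>] \<open>m \<alpha>\<^sub>2 = n\<close> by (auto simp: homogeneous_columns_def)
  with dm[OF \<open>\<alpha>\<^sub>1 \<in> T\<close>] \<open>m \<alpha>\<^sub>1 = n\<close> show False by simp
qed

theorem mainTheorem6:
  assumes "omega1_type TYPE('a::wellorder)"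
    and "superclub TYPE('a)"
  shows "\<exists>c :: 'a \<Rightarrow> nat \<Rightarrow> bool. \<forall>Y Z. \<not> countable Y \<and> infinite Z \<longrightarrow>
           \<not> (\<exists>b. \<forall>y\<in>Y. \<forall>z\<in>Z. c y z = b)"
proof -
  obtain S :: "'a \<Rightarrow> 'a set" where below: "\<And>\<alpha>. S \<alpha> \<subseteq> {\<beta>. \<beta> < \<alpha>}"
    and guessing: "\<And>A. \<not> countable A \<Longrightarrow>
        \<exists>B \<subseteq> A. \<not> countable B \<and> stationary {\<alpha>. B \<inter> {\<beta>. \<beta> < \<alpha>} = S \<alpha>}"
    using assms(2) unfolding superclub_def by blast
  show ?thesis
  proof (intro exI[of _ "superclub_coloring S"] allI impI notI, elim conjE exE)
    fix Y Z b
    assume "\<not> countable Y" "infinite Z" and hom: "\<forall>y\<in>Y. \<forall>z\<in>Z. superclub_coloring S y z = b"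
    obtain B where "B \<subseteq> Y" "\<not> countable B"
      and stationary: "stationary {\<alpha>. B \<inter> {\<beta>. \<beta> < \<alpha>} = S \<alpha>}"
      using guessing[OF \<open>\<not> countable Y\<close>] by blast
    have "\<not> (\<forall>y\<in>B. \<forall>z\<in>Z. superclub_coloring S y z = b)"
    proof (rule escaping_coloring_not_homogeneous[OF assms(1) superclub_coloring_escaping[OF assms(1) below]])
      show "\<not> countable {\<alpha>. B \<inter> {\<beta>. \<beta> < \<alpha>} = S \<alpha>}"
        using stationary_uncountable[OF assms(1) stationary] .
    qed (use \<open>\<not> countable B\<close> \<open>infinite Z\<close> in auto)
    with hom \<open>B \<subseteq> Y\<close> show False by blast
  qed
qed

end
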